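(* Let $\mathcal M$ satisfy Assumptions (A) and (RE). If a predictor $h(X,S)$ is counterfactually fair, then it satisfies statistical parity, i.e. $h(X,S)$ is independent of $S$. The converse does not hold in general: there exist an SCM satisfying (A) and (RE) and a predictor satisfying statistical parity that is not counterfactually fair.
   Context: Setting: a structural causal model $\mathcal M$ (exogenous random vector $U$, possibly with dependent components; structural equations $V_i=G_i(V_{\mathrm{Endo}(i)},U_{\mathrm{Exo}(i)})$ with measurable $G_i$) whose a.s. unique solution is $(X,S)$ with $X$ valued in $\mathcal X\subseteq\mathbb R^d$ and $S$ valued in a finite $\mathcal S\subset\mathbb R$ with $\mathbb P(S=s)>0$ for all $s$. Assumption (A): the causal graph (edge $k\to l$ iff $k$ is an endogenous or exogenous parent of $l$) is acyclic. $U_X,U_S$ denote the exogenous parents of $X$ and of $S$. For $s\in\mathcal S$, $X_{S=s}$ is the $X$-component of the solution of the model where the equation of $S$ is replaced by $S=s$, all else (including $U$) unchanged. $\mu_s:=\mathcal L(X\mid S=s)$, $\mathcal X_s:=\operatorname{supp}\mu_s$. Assumption (RE): $U_S$ is independent of $U_X$, and no component of $X$ is an endogenous parent of $S$. A predictor $\hat Y=h(X,S)$ with $h:\mathcal X\times\mathcal S\to\mathbb R$ measurable is counterfactually fair if for every $s,s'\in\mathcal S$ and $\mu_s$-almost every $x\in\mathcal X_s$, $\mathcal L(\hat Y_{S=s}\mid X=x,S=s)=\mathcal L(\hat Y_{S=s'}\mid X=x,S=s)$, where $\hat Y_{S=s}:=h(X_{S=s},s)$. *)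

theory Defs
  imports "HOL-Probability.Probability"
begin

text \<open>
Endogenous variables are indexed by the type 'd option:
index None is the sensitive attribute S, index Some k is the k-th component of X
(so X is valued in real^'d).  The exogenous vector U is valued in real^'e, its law
is the probability measure PU on the Borel sets of real^'e (components may be
dependent).  G i v u is the structural function of endogenous variable i, where v
is an assignment of values to all endogenous variables and u the exogenous value;
Endo i and Exo i are its endogenous and exogenous parents, and G i depends only on
v restricted to Endo i and u restricted to Exo i.
\<close>

type_synonym ('d, 'e) struct_eqs = "'d option \<Rightarrow> ('d option \<Rightarrow> real) \<Rightarrow> real^'e \<Rightarrow> real"

definition endo_val :: "real^'d \<Rightarrow> real \<Rightarrow> 'd option \<Rightarrow> real" where
  "endo_val x s = (\<lambda>i. case i of None \<Rightarrow> s | Some k \<Rightarrow> x $ k)"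

definition is_solution :: "('d, 'e) struct_eqs \<Rightarrow> ('d option \<Rightarrow> real) \<Rightarrow> real^'e \<Rightarrow> bool" where
  "is_solution G v u \<longleftrightarrow> (\<forall>i. v i = G i v u)"

definition intervene_S :: "('d, 'e) struct_eqs \<Rightarrow> real \<Rightarrow> ('d, 'e) struct_eqs" where
  "intervene_S G s = G(None := (\<lambda>_ _. s))"

definition causal_graph ::
  "('d option \<Rightarrow> 'd option set) \<Rightarrow> ('d option \<Rightarrow> 'e set) \<Rightarrow> (('d option + 'e) \<times> ('d option + 'e)) set" where
  "causal_graph Endo Exo =
     {(Inl k, Inl l) | k l. k \<in> Endo l} \<union> {(Inr j, Inl l) | j l. j \<in> Exo l}"

definition exo_X :: "('d option \<Rightarrow> 'e set) \<Rightarrow> 'e set" where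
  "exo_X Exo = (\<Union>k. Exo (Some k))"

definition exo_S :: "('d option \<Rightarrow> 'e set) \<Rightarrow> 'e set" where
  "exo_S Exo = Exo None"

definition restr_exo :: "'e set \<Rightarrow> real^'e \<Rightarrow> ('e \<Rightarrow> real)" where
  "restr_exo J u = (\<lambda>j\<in>J. u $ j)"

definition scm_setting ::
  "(real^'e) measure \<Rightarrow> ('d, 'e) struct_eqs \<Rightarrow> ('d option \<Rightarrow> 'd option set) \<Rightarrow> ('d option \<Rightarrow> 'e set)
   \<Rightarrow> (real^'e \<Rightarrow> real^'d) \<Rightarrow> (real^'e \<Rightarrow> real) \<Rightarrow> (real \<Rightarrow> real^'e \<Rightarrow> real^'d) \<Rightarrow> real set \<Rightarrow> bool" where
  "scm_setting PU G Endo Exo X S Xdo Ss \<longleftrightarrow>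
     prob_space PU \<and> sets PU = sets borel \<and>
     (\<forall>i. (\<lambda>(v, u). G i v u) \<in> borel_measurable (PiM UNIV (\<lambda>_. borel) \<Otimes>\<^sub>M borel)) \<and>
     (\<forall>i v v' u u'. (\<forall>k\<in>Endo i. v k = v' k) \<longrightarrow> (\<forall>j\<in>Exo i. u $ j = u' $ j)
        \<longrightarrow> G i v u = G i v' u') \<and>
     X \<in> borel_measurable PU \<and> S \<in> borel_measurable PU \<and>
     (AE u in PU. is_solution G (endo_val (X u) (S u)) u) \<and>
     finite Ss \<and> (AE u in PU. S u \<in> Ss) \<and>
     (\<forall>s\<in>Ss. measure PU {u \<in> space PU. S u = s} > 0) \<and>
     (\<forall>s\<in>Ss. Xdo s \<in> borel_measurable PU \<and>
        (AE u in PU. is_solution (intervene_S G s) (endo_val (Xdo s u) s) u))"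

definition assm_A :: "('d option \<Rightarrow> 'd option set) \<Rightarrow> ('d option \<Rightarrow> 'e set) \<Rightarrow> bool" where
  "assm_A Endo Exo \<longleftrightarrow> acyclic (causal_graph Endo Exo)"

definition assm_RE :: "(real^'e) measure \<Rightarrow> ('d option \<Rightarrow> 'd option set) \<Rightarrow> ('d option \<Rightarrow> 'e set) \<Rightarrow> bool" where
  "assm_RE PU Endo Exo \<longleftrightarrow>
     prob_space.indep_var PU
       (PiM (exo_S Exo) (\<lambda>_. borel)) (restr_exo (exo_S Exo))
       (PiM (exo_X Exo) (\<lambda>_. borel)) (restr_exo (exo_X Exo)) \<and>
     (\<forall>k. Some k \<notin> Endo None)"

definition cond_S :: "'w measure \<Rightarrow> ('w \<Rightarrow> real) \<Rightarrow> real \<Rightarrow> 'w measure" where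
  "cond_S M S s = uniform_measure M {w \<in> space M. S w = s}"

definition is_cond_law ::
  "'w measure \<Rightarrow> ('w \<Rightarrow> 'a::topological_space) \<Rightarrow> ('w \<Rightarrow> 'b::topological_space) \<Rightarrow> ('a \<Rightarrow> 'b measure) \<Rightarrow> bool" where
  "is_cond_law Q X Y \<kappa> \<longleftrightarrow>
     (\<forall>x. prob_space (\<kappa> x) \<and> sets (\<kappa> x) = sets borel) \<and>
     (\<forall>B \<in> sets borel. (\<lambda>x. emeasure (\<kappa> x) B) \<in> borel_measurable borel) \<and>
     (\<forall>A \<in> sets borel. \<forall>B \<in> sets borel.
        emeasure Q {w \<in> space Q. X w \<in> A \<and> Y w \<in> B} =
        (\<integral>\<^sup>+ x \<in> A. emeasure (\<kappa> x) B \<partial>distr Q borel X))"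

definition cond_laws_ae_eq ::
  "'w measure \<Rightarrow> ('w \<Rightarrow> 'a::topological_space) \<Rightarrow> ('w \<Rightarrow> 'b::topological_space) \<Rightarrow> ('w \<Rightarrow> 'b) \<Rightarrow> bool" where
  "cond_laws_ae_eq Q X Y Y' \<longleftrightarrow>
     (\<exists>\<kappa> \<kappa>'. is_cond_law Q X Y \<kappa> \<and> is_cond_law Q X Y' \<kappa>' \<and>
        (AE x in distr Q borel X. \<kappa> x = \<kappa>' x))"

definition cf_fair ::
  "(real^'e) measure \<Rightarrow> (real^'e \<Rightarrow> real^'d) \<Rightarrow> (real^'e \<Rightarrow> real) \<Rightarrow> (real \<Rightarrow> real^'e \<Rightarrow> real^'d)
   \<Rightarrow> real set \<Rightarrow> (real^'d \<Rightarrow> real \<Rightarrow> real) \<Rightarrow> bool" where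
  "cf_fair PU X S Xdo Ss h \<longleftrightarrow>
     (\<forall>s\<in>Ss. \<forall>s'\<in>Ss.
        cond_laws_ae_eq (cond_S PU S s) X (\<lambda>u. h (Xdo s u) s) (\<lambda>u. h (Xdo s' u) s'))"

definition stat_parity ::
  "(real^'e) measure \<Rightarrow> (real^'e \<Rightarrow> real^'d) \<Rightarrow> (real^'e \<Rightarrow> real) \<Rightarrow> (real^'d \<Rightarrow> real \<Rightarrow> real) \<Rightarrow> bool" where
  "stat_parity PU X S h \<longleftrightarrow>
     prob_space.indep_var PU borel (\<lambda>u. h (X u) (S u)) borel S"

end

theory Submission
  imports Defs
begin

(*
  By acyclicity, the model with S := s has a unique solution, obtained by iterating the
  structural equations as often as there are endogenous variables.  Hence X_{S=s} is almost
  surely a measurable function of U_X, while S, having no endogenous parents under (RE), is a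
  function of U_S; so every counterfactual prediction h(X_{S=s}, s) is independent of S.  On
  {S = s} the prediction h(X, S) coincides with h(X_{S=s}, s), and counterfactual fairness
  makes P(h(X_{S=s}, s) \<in> B, S = s) the same for all s.  Summing over the finitely many
  values s gives P(h(X, S) \<in> B, S \<in> C) = P(h(X_{S=s0}, s0) \<in> B) P(S \<in> C).

  For the converse, let U1, U2 be independent fair coins, S := U1, X := U2 and
  h(X, S) = |X - S|.  Then h(X, S) is again a fair coin independent of S, but given S = 0 and
  X = 0 the counterfactual predictions h(X, 0) = 0 and h(X, 1) = 1 differ.
*)

subsection \<open>Solving acyclic structural equations\<close>

lemma endo_val_None [simp]: "endo_val x s None = s"
  and endo_val_Some [simp]: "endo_val x s (Some k) = x $ k"
  by (simp_all add: endo_val_def)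

lemma endo_val_eq_iff: "endo_val x s = endo_val x' s \<longleftrightarrow> x = x'"
  by (auto simp: endo_val_def vec_eq_iff fun_eq_iff split: option.split)

definition solve_iter :: "('d, 'e) struct_eqs \<Rightarrow> real^'e \<Rightarrow> nat \<Rightarrow> 'd option \<Rightarrow> real" where
  "solve_iter G u n = ((\<lambda>v i. G i v u) ^^ n) (\<lambda>_. 0)"

lemma solve_iter_0 [simp]: "solve_iter G u 0 = (\<lambda>_. 0)"
  by (simp add: solve_iter_def)

lemma solve_iter_Suc: "solve_iter G u (Suc n) = (\<lambda>i. G i (solve_iter G u n) u)"
  by (simp add: solve_iter_def)

text \<open>
  The components that are correct from step \<open>k\<close> on form a set that grows strictly until it
  is everything: a minimal incorrect component has only correct parents, so it is correct one
  step later.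
\<close>
lemma solve_iter_eq_solution:
  fixes G :: "('d::finite, 'e::finite) struct_eqs"
  assumes wf: "wf {(k, l). k \<in> Endo l}"
    and local: "\<And>i v v'. \<forall>k\<in>Endo i. v k = v' k \<Longrightarrow> G i v u = G i v' u"
    and sol: "is_solution G w u"
  shows "solve_iter G u CARD('d option) = w"
proof -
  define C where "C k = {i. \<forall>j\<ge>k. solve_iter G u j i = w i}" for k
  have C_grows: "C k \<subset> C (Suc k)" if "C k \<noteq> UNIV" for k
  proof -
    from that wf obtain i where i: "i \<notin> C k" and min: "\<And>k'. k' \<in> Endo i \<Longrightarrow> k' \<in> C k"
      unfolding wf_eq_minimal by (metis (lifting) Compl_iff UNIV_eq_I case_prodI mem_Collect_eq)
    have "i \<in> C (Suc k)"
    proof (clarsimp simp: C_def)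
      fix j assume "Suc k \<le> j"
      then obtain j' where j: "j = Suc j'" "k \<le> j'" by (cases j) auto
      with min have "\<forall>k'\<in>Endo i. solve_iter G u j' k' = w k'" by (auto simp: C_def)
      then have "G i (solve_iter G u j') u = G i w u" by (rule local)
      with sol j(1) show "solve_iter G u j i = w i" by (simp add: is_solution_def solve_iter_Suc)
    qed
    with i show ?thesis by (auto simp: C_def)
  qed
  have "min k CARD('d option) \<le> card (C k)" for k
  proof (induction k)
    case (Suc k)
    show ?case
    proof (cases "C k = UNIV")
      case True
      moreover have "C k \<subseteq> C (Suc k)" by (auto simp: C_def)
      ultimately have "C (Suc k) = UNIV" by auto
      then show ?thesis by simp
    next
      case False
      then have "card (C k) < card (C (Suc k))" by (intro psubset_card_mono C_grows) auto
      with Suc.IH show ?thesis by linarith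
    qed
  qed simp
  then have "C CARD('d option) = UNIV"
    by (metis card_seteq finite min.idem subset_UNIV)
  then show ?thesis
    unfolding C_def by (intro ext) (metis (mono_tags) UNIV_I mem_Collect_eq order_refl)
qed

lemma measurable_solve_iter:
  fixes G :: "('d, 'e::finite) struct_eqs"
  assumes "\<And>i. (\<lambda>(v, u). G i v u) \<in> borel_measurable (PiM UNIV (\<lambda>_. borel) \<Otimes>\<^sub>M borel)"
  shows "(\<lambda>u. solve_iter G u n) \<in> measurable borel (PiM UNIV (\<lambda>_. borel))"
proof (induction n)
  case 0
  show ?case by (simp add: measurable_abs_UNIV)
next
  case (Suc n)
  have "(\<lambda>u. (solve_iter G u n, u)) \<in> measurable borel (PiM UNIV (\<lambda>_. borel) \<Otimes>\<^sub>M borel)"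
    using Suc.IH by (intro measurable_Pair) auto
  from measurable_comp[OF this assms] show ?case
    by (simp add: comp_def measurable_abs_UNIV solve_iter_Suc)
qed

lemma solve_iter_cong_exo:
  assumes "\<And>i v. G i v u = G i v u'"
  shows "solve_iter G u n = solve_iter G u' n"
  by (induction n) (simp_all add: assms solve_iter_Suc)

lemma borel_measurable_vec_lambda:
  fixes f :: "'n::finite \<Rightarrow> 'a \<Rightarrow> real"
  assumes "\<And>j. f j \<in> borel_measurable M"
  shows "(\<lambda>x. \<chi> j. f j x) \<in> borel_measurable M"
  by (subst borel_measurable_euclidean_space)
    (use assms in \<open>auto simp: Basis_vec_def cart_eq_inner_axis[symmetric] inner_axis\<close>)

lemma borel_measurable_vec_nth [measurable]: "(\<lambda>u::real^'n::finite. u $ j) \<in> borel_measurable borel"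
  by (intro borel_measurable_continuous_onI continuous_intros)

definition extend_exo :: "'e set \<Rightarrow> ('e \<Rightarrow> real) \<Rightarrow> real^'e" where
  "extend_exo J w = (\<chi> j. if j \<in> J then w j else 0)"

lemma extend_restr_exo: "j \<in> J \<Longrightarrow> extend_exo J (restr_exo J u) $ j = u $ j"
  by (simp add: extend_exo_def restr_exo_def)

lemma measurable_extend_exo:
  "extend_exo J \<in> borel_measurable (PiM J (\<lambda>_. borel :: real measure))"
  unfolding extend_exo_def
proof (intro borel_measurable_vec_lambda)
  fix j
  show "(\<lambda>w. if j \<in> J then w j else 0) \<in> borel_measurable (PiM J (\<lambda>_. borel))"
    by (cases "j \<in> J") simp_all
qed

subsection \<open>Independence and conditioning on a discrete variable\<close>

lemma (in prob_space) indep_var_prob_conj: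
  assumes "indep_var N1 X N2 Y" "A \<in> sets N1" "B \<in> sets N2"
  shows "\<P>(x in M. X x \<in> A \<and> Y x \<in> B) = \<P>(x in M. X x \<in> A) * \<P>(x in M. Y x \<in> B)"
  using indep_varD[OF assms] by (simp add: Int_def conj_commute vimage_def)

lemma (in prob_space) indep_varI_prob_conj:
  assumes "random_variable N1 X" "random_variable N2 Y"
    and "\<And>A B. A \<in> sets N1 \<Longrightarrow> B \<in> sets N2 \<Longrightarrow>
      \<P>(x in M. X x \<in> A \<and> Y x \<in> B) = \<P>(x in M. X x \<in> A) * \<P>(x in M. Y x \<in> B)"
  shows "indep_var N1 X N2 Y"
proof -
  have "indep_set {X -` A \<inter> space M | A. A \<in> sets N1} {Y -` B \<inter> space M | B. B \<in> sets N2}"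
  proof (rule indep_setI)
    fix a b
    assume "a \<in> {X -` A \<inter> space M | A. A \<in> sets N1}" "b \<in> {Y -` B \<inter> space M | B. B \<in> sets N2}"
    then obtain A B where "A \<in> sets N1" "B \<in> sets N2" "a = X -` A \<inter> space M" "b = Y -` B \<inter> space M"
      by blast
    moreover have "a \<inter> b = {x \<in> space M. X x \<in> A \<and> Y x \<in> B}"
      using \<open>a = _\<close> \<open>b = _\<close> by auto
    ultimately show "prob (a \<inter> b) = prob a * prob b"
      using assms(3)[of A B] by (simp add: vimage_def Int_def conj_commute)
  qed (use assms(1,2) in \<open>auto simp: measurable_sets\<close>)
  then have "indep_sets (case_bool {X -` A \<inter> space M | A. A \<in> sets N1} {Y -` B \<inter> space M | B. B \<in> sets N2}) UNIV"
    by (simp add: indep_set_def)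
  moreover have "case_bool {X -` A \<inter> space M | A. A \<in> sets N1} {Y -` B \<inter> space M | B. B \<in> sets N2} =
      (\<lambda>i. {case_bool X Y i -` A \<inter> space M | A. A \<in> sets (case_bool N1 N2 i)})"
    by (rule ext) (simp split: bool.split)
  ultimately show ?thesis
    using assms(1,2) unfolding indep_var_def indep_vars_def2 by (auto split: bool.split)
qed

lemma (in prob_space) indep_var_AE_cong:
  assumes "indep_var N1 X N2 Y" "AE x in M. X x = X' x" "AE x in M. Y x = Y' x"
    and "random_variable N1 X'" "random_variable N2 Y'"
  shows "indep_var N1 X' N2 Y'"
proof -
  have X: "random_variable N1 X" and Y: "random_variable N2 Y"
    using indep_var_rv1[OF assms(1)] indep_var_rv2[OF assms(1)] .
  have "distr M N1 X = distr M N1 X'" "distr M N2 Y = distr M N2 Y'"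
    using assms(2-5) X Y by (auto intro!: distr_cong_AE)
  moreover have "distr M (N1 \<Otimes>\<^sub>M N2) (\<lambda>x. (X x, Y x)) = distr M (N1 \<Otimes>\<^sub>M N2) (\<lambda>x. (X' x, Y' x))"
    using assms(2-5) X Y by (intro distr_cong_AE) (auto elim: eventually_elim2)
  ultimately show ?thesis
    using assms(1,4,5) by (simp add: indep_var_distribution_eq)
qed

lemma (in prob_space) prob_eq_sum_values:
  fixes S :: "'a \<Rightarrow> real"
  assumes "finite Ss" "AE x in M. S x \<in> Ss"
    and [measurable]: "S \<in> borel_measurable M" "Measurable.pred M P" "C \<in> sets borel"
  shows "\<P>(x in M. P x \<and> S x \<in> C) = (\<Sum>s\<in>C \<inter> Ss. \<P>(x in M. P x \<and> S x = s))"
proof -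
  have [measurable]: "Ss \<in> sets borel"
    using assms(1) by (simp add: finite_imp_closed)
  have "\<P>(x in M. P x \<and> S x \<in> C) = \<P>(x in M. P x \<and> S x \<in> C \<inter> Ss)"
    using assms(2) by (intro prob_eq_AE) (auto elim: eventually_mono)
  also have "\<dots> = measure M (\<Union>s\<in>C \<inter> Ss. {x \<in> space M. P x \<and> S x = s})"
    by (auto intro!: arg_cong[where f = prob])
  also have "\<dots> = (\<Sum>s\<in>C \<inter> Ss. \<P>(x in M. P x \<and> S x = s))"
    using assms(1) by (intro finite_measure_finite_Union) (auto simp: disjoint_family_on_def)
  finally show ?thesis .
qed

lemma cond_laws_ae_eq_emeasure_eq:
  assumes "cond_laws_ae_eq Q X Y Y'" "A \<in> sets borel" "B \<in> sets borel"
  shows "emeasure Q {w \<in> space Q. X w \<in> A \<and> Y w \<in> B} = emeasure Q {w \<in> space Q. X w \<in> A \<and> Y' w \<in> B}"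
proof -
  obtain \<kappa> \<kappa>' where "is_cond_law Q X Y \<kappa>" "is_cond_law Q X Y' \<kappa>'"
    and ae: "AE x in distr Q borel X. \<kappa> x = \<kappa>' x"
    using assms(1) unfolding cond_laws_ae_eq_def by blast
  with assms(2,3) have "emeasure Q {w \<in> space Q. X w \<in> A \<and> Y w \<in> B} = (\<integral>\<^sup>+x\<in>A. emeasure (\<kappa> x) B \<partial>distr Q borel X)"
    and "emeasure Q {w \<in> space Q. X w \<in> A \<and> Y' w \<in> B} = (\<integral>\<^sup>+x\<in>A. emeasure (\<kappa>' x) B \<partial>distr Q borel X)"
    unfolding is_cond_law_def by blast+
  moreover have "(\<integral>\<^sup>+x\<in>A. emeasure (\<kappa> x) B \<partial>distr Q borel X) = (\<integral>\<^sup>+x\<in>A. emeasure (\<kappa>' x) B \<partial>distr Q borel X)"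
    using ae by (intro nn_integral_cong_AE) (auto elim!: eventually_mono)
  ultimately show ?thesis by simp
qed

lemma (in prob_space) prob_cond_S:
  assumes "S \<in> borel_measurable M" "\<P>(w in M. S w = s) > 0" "Measurable.pred M P"
  shows "\<P>(w in cond_S M S s. P w) = \<P>(w in M. P w \<and> S w = s) / \<P>(w in M. S w = s)"
proof -
  have [measurable]: "{w \<in> space M. S w = s} \<in> events"
    using assms(1) by measurable
  then have "emeasure M {w \<in> space M. S w = s} \<noteq> 0"
    using assms(2) by (simp add: emeasure_eq_measure)
  moreover have "{w \<in> space M. S w = s} \<inter> {w \<in> space M. P w} = {w \<in> space M. P w \<and> S w = s}"
    by auto
  ultimately show ?thesis
    using assms(3) by (simp add: cond_S_def emeasure_eq_measure)
qed

lemma (in prob_space) cond_laws_ae_eq_prob_eq: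
  assumes "cond_laws_ae_eq (cond_S M S s) X Y Y'" "A \<in> sets borel" "B \<in> sets borel"
    and [measurable]: "X \<in> borel_measurable M" "S \<in> borel_measurable M"
      "Y \<in> borel_measurable M" "Y' \<in> borel_measurable M"
    and pos: "\<P>(w in M. S w = s) > 0"
  shows "\<P>(w in M. X w \<in> A \<and> Y w \<in> B \<and> S w = s) = \<P>(w in M. X w \<in> A \<and> Y' w \<in> B \<and> S w = s)"
proof -
  have "\<P>(w in cond_S M S s. X w \<in> A \<and> Y w \<in> B) = \<P>(w in cond_S M S s. X w \<in> A \<and> Y' w \<in> B)"
    using cond_laws_ae_eq_emeasure_eq[OF assms(1-3)] by (simp add: measure_def)
  with pos show ?thesis
    using assms(2,3) by (simp add: prob_cond_S)
qed

text \<open>\<open>Y s\<close> stands for the counterfactual prediction \<open>h(X_{S=s}, s)\<close>.\<close>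
lemma (in prob_space) indep_var_if_counterfactuals_agree:
  fixes Z S :: "'a \<Rightarrow> real" and Y :: "real \<Rightarrow> 'a \<Rightarrow> real"
  assumes Ss: "finite Ss" "AE x in M. S x \<in> Ss"
    and [measurable]: "random_variable borel Z" "random_variable borel S"
    and agree: "\<And>s. s \<in> Ss \<Longrightarrow> AE x in M. S x = s \<longrightarrow> Z x = Y s x"
    and invariant: "\<And>s s' B. s \<in> Ss \<Longrightarrow> s' \<in> Ss \<Longrightarrow> B \<in> sets borel \<Longrightarrow>
      \<P>(x in M. Y s x \<in> B \<and> S x = s) = \<P>(x in M. Y s' x \<in> B \<and> S x = s)"
    and indep: "\<And>s. s \<in> Ss \<Longrightarrow> indep_var borel S borel (Y s)"
  shows "indep_var borel Z borel S"
proof -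
  obtain s0 where s0: "s0 \<in> Ss"
    using Ss(2) AE_False by (metis (lifting) ex_in_conv eventually_mono)
  note [measurable] = indep_var_rv2[OF indep]
  have slice: "\<P>(x in M. Z x \<in> B \<and> S x = s) = \<P>(x in M. Y s0 x \<in> B) * \<P>(x in M. S x = s)"
    if s: "s \<in> Ss" and [measurable]: "B \<in> sets borel" for s B
  proof -
    have "\<P>(x in M. Z x \<in> B \<and> S x = s) = \<P>(x in M. Y s x \<in> B \<and> S x = s)"
      using agree[OF s] s by (intro prob_eq_AE) (auto elim: eventually_mono)
    also have "\<dots> = \<P>(x in M. Y s0 x \<in> B \<and> S x = s)"
      using invariant[OF s s0] by simp
    also have "\<dots> = \<P>(x in M. Y s0 x \<in> B) * \<P>(x in M. S x = s)"
      using indep_var_prob_conj[OF indep[OF s0], of "{s}" B] by (simp add: conj_commute)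
    finally show ?thesis .
  qed
  have rect: "\<P>(x in M. Z x \<in> B \<and> S x \<in> C) = \<P>(x in M. Y s0 x \<in> B) * \<P>(x in M. S x \<in> C)"
    if [measurable]: "B \<in> sets borel" "C \<in> sets borel" for B C
    using Ss by (simp add: prob_eq_sum_values[where P = "\<lambda>x. Z x \<in> B"] slice sum_distrib_left
        prob_eq_sum_values[where P = "\<lambda>_. True", simplified])
  have "\<P>(x in M. Z x \<in> B) = \<P>(x in M. Y s0 x \<in> B)" if "B \<in> sets borel" for B
    using rect[OF that sets.top] by (simp add: prob_space)
  with rect show ?thesis
    by (intro indep_varI_prob_conj) auto
qed

subsection \<open>Counterfactual fairness implies statistical parity\<close>

locale acyclic_scm_RE =
  fixes PU :: "(real^'e::finite) measure" and G :: "('d::finite, 'e) struct_eqs"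
    and Endo :: "'d option \<Rightarrow> 'd option set" and Exo :: "'d option \<Rightarrow> 'e set"
    and X :: "real^'e \<Rightarrow> real^'d" and S :: "real^'e \<Rightarrow> real"
    and Xdo :: "real \<Rightarrow> real^'e \<Rightarrow> real^'d" and Ss :: "real set"
  assumes setting: "scm_setting PU G Endo Exo X S Xdo Ss"
    and acyclic: "assm_A Endo Exo" and RE: "assm_RE PU Endo Exo"
begin

sublocale prob_space PU
  using setting by (simp add: scm_setting_def)

lemma sets_PU [measurable_cong]: "sets PU = sets borel"
  using setting by (simp add: scm_setting_def)

lemma G_measurable: "(\<lambda>(v, u). G i v u) \<in> borel_measurable (PiM UNIV (\<lambda>_. borel) \<Otimes>\<^sub>M borel)"
  using setting by (simp add: scm_setting_def)

lemma G_local: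
  "\<forall>k\<in>Endo i. v k = v' k \<Longrightarrow> \<forall>j\<in>Exo i. u $ j = u' $ j \<Longrightarrow> G i v u = G i v' u'"
  using setting unfolding scm_setting_def by blast

lemma X_measurable [measurable]: "X \<in> borel_measurable PU"
  and S_measurable [measurable]: "S \<in> borel_measurable PU"
  and Xdo_measurable [measurable]: "s \<in> Ss \<Longrightarrow> Xdo s \<in> borel_measurable PU"
  using setting by (auto simp: scm_setting_def)

lemma AE_solution: "AE u in PU. is_solution G (endo_val (X u) (S u)) u"
  and AE_intervened_solution:
    "s \<in> Ss \<Longrightarrow> AE u in PU. is_solution (intervene_S G s) (endo_val (Xdo s u) s) u"
  using setting by (auto simp: scm_setting_def)

lemma finite_Ss: "finite Ss" and AE_S_in_Ss: "AE u in PU. S u \<in> Ss"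
  and prob_S_pos: "s \<in> Ss \<Longrightarrow> \<P>(u in PU. S u = s) > 0"
  using setting by (auto simp: scm_setting_def)

lemma wf_Endo: "wf {(k, l). k \<in> Endo l}"
proof -
  have "wf (causal_graph Endo Exo)"
    using acyclic unfolding assm_A_def by (intro finite_acyclic_wf) (rule finite_subset[of _ UNIV], auto)
  then have "wf (inv_image (causal_graph Endo Exo) Inl)"
    by (rule wf_inv_image)
  then show ?thesis
    by (rule wf_subset) (auto simp: causal_graph_def)
qed

lemma Endo_S: "Endo None = {}"
proof -
  have "None \<notin> Endo None"
    using wf_Endo by (auto dest: wf_not_refl)
  moreover have "Some k \<notin> Endo None" for k
    using RE by (simp add: assm_RE_def)
  ultimately show ?thesis
    by (metis equals0I not_None_eq)
qed

text \<open>A version of \<open>X_{S=s}\<close> that is defined and measurable everywhere.\<close>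
definition counterfactual :: "real \<Rightarrow> real^'e \<Rightarrow> real^'d" where
  "counterfactual s u = (\<chi> k. solve_iter (intervene_S G s) u CARD('d option) (Some k))"

lemma intervened_solution_eq_solve_iter:
  assumes "is_solution (intervene_S G s) w u"
  shows "w = solve_iter (intervene_S G s) u CARD('d option)"
proof (rule solve_iter_eq_solution[OF wf_Endo _ assms, symmetric])
  fix i and v v' :: "'d option \<Rightarrow> real"
  assume "\<forall>k\<in>Endo i. v k = v' k"
  then show "intervene_S G s i v u = intervene_S G s i v' u"
    by (simp add: intervene_S_def G_local)
qed

lemma AE_Xdo_eq_counterfactual:
  assumes "s \<in> Ss"
  shows "AE u in PU. Xdo s u = counterfactual s u"
  using AE_intervened_solution[OF assms]
proof eventually_elim
  case (elim u)
  from intervened_solution_eq_solve_iter[OF elim]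
  have "Xdo s u $ k = solve_iter (intervene_S G s) u CARD('d option) (Some k)" for k
    by (metis endo_val_Some)
  then show ?case
    by (simp add: counterfactual_def vec_eq_iff)
qed

lemma AE_X_eq_Xdo:
  assumes "s \<in> Ss"
  shows "AE u in PU. S u = s \<longrightarrow> X u = Xdo s u"
  using AE_solution AE_intervened_solution[OF assms]
proof eventually_elim
  case (elim u)
  have "is_solution (intervene_S G s) (endo_val (X u) s) u" if "S u = s"
    unfolding is_solution_def
  proof
    fix i
    show "endo_val (X u) s i = intervene_S G s i (endo_val (X u) s) u"
      using elim(1)[unfolded is_solution_def, rule_format, of i] that
      by (cases i) (simp_all add: intervene_S_def)
  qed
  with elim(2) show ?case
    by (metis intervened_solution_eq_solve_iter endo_val_eq_iff)
qed

lemma intervene_S_measurable: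
  "(\<lambda>(v, u). intervene_S G s i v u) \<in> borel_measurable (PiM UNIV (\<lambda>_. borel) \<Otimes>\<^sub>M borel)"
  using G_measurable[of i] by (cases i) (auto simp: intervene_S_def)

lemma counterfactual_measurable [measurable]: "counterfactual s \<in> borel_measurable borel"
  unfolding counterfactual_def
proof (intro borel_measurable_vec_lambda)
  fix k
  have "(\<lambda>u. solve_iter (intervene_S G s) u CARD('d option)) \<in> measurable borel (PiM UNIV (\<lambda>_. borel))"
    by (rule measurable_solve_iter[OF intervene_S_measurable])
  from measurable_compose[OF this measurable_component_singleton[of "Some k"]]
  show "(\<lambda>u. solve_iter (intervene_S G s) u CARD('d option) (Some k)) \<in> borel_measurable borel"
    by simp
qed

lemma counterfactual_determined_by_exo_X:
  "counterfactual s (extend_exo (exo_X Exo) (restr_exo (exo_X Exo) u)) = counterfactual s u"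
proof -
  have "intervene_S G s i v (extend_exo (exo_X Exo) (restr_exo (exo_X Exo) u)) = intervene_S G s i v u"
    for i v
    by (cases i) (auto simp: intervene_S_def exo_X_def intro!: G_local extend_restr_exo)
  then show ?thesis
    unfolding counterfactual_def by (metis solve_iter_cong_exo)
qed

lemma AE_S_determined_by_exo_S:
  "AE u in PU. S u = G None (\<lambda>_. 0) (extend_exo (exo_S Exo) (restr_exo (exo_S Exo) u))"
  using AE_solution
proof eventually_elim
  case (elim u)
  then have "S u = G None (endo_val (X u) (S u)) u"
    unfolding is_solution_def by (metis endo_val_None)
  also have "\<dots> = G None (\<lambda>_. 0) (extend_exo (exo_S Exo) (restr_exo (exo_S Exo) u))"
    by (intro G_local) (simp_all add: Endo_S exo_S_def extend_restr_exo)
  finally show ?case .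
qed

lemma indep_S_counterfactual:
  assumes h: "(\<lambda>(x, s). h x s) \<in> borel_measurable (borel \<Otimes>\<^sub>M borel)"
  shows "indep_var borel S borel (\<lambda>u. h (counterfactual t u) t)"
proof -
  define fS where "fS w = G None (\<lambda>_. 0) (extend_exo (exo_S Exo) w)" for w
  define fY where "fY w = h (counterfactual t (extend_exo (exo_X Exo) w)) t" for w
  have "(\<lambda>u. ((\<lambda>_. 0), u)) \<in> measurable borel (PiM UNIV (\<lambda>_. borel) \<Otimes>\<^sub>M borel)"
    by (intro measurable_Pair measurable_const) (auto simp: space_PiM)
  from measurable_compose[OF this G_measurable[of None]]
  have "(\<lambda>u. G None (\<lambda>_. 0) u) \<in> borel_measurable borel"
    by simp
  then have "fS \<in> borel_measurable (PiM (exo_S Exo) (\<lambda>_. borel))"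
    unfolding fS_def by (rule measurable_compose[OF measurable_extend_exo])
  moreover have hY: "(\<lambda>u. h (counterfactual t u) t) \<in> borel_measurable borel"
    using measurable_compose[OF measurable_Pair[OF counterfactual_measurable measurable_const] h]
    by simp
  then have "fY \<in> borel_measurable (PiM (exo_X Exo) (\<lambda>_. borel))"
    unfolding fY_def by (rule measurable_compose[OF measurable_extend_exo])
  ultimately have "indep_var borel (fS \<circ> restr_exo (exo_S Exo)) borel (fY \<circ> restr_exo (exo_X Exo))"
    using RE unfolding assm_RE_def by (intro indep_var_compose) auto
  then show ?thesis
  proof (rule indep_var_AE_cong)
    show "AE u in PU. (fS \<circ> restr_exo (exo_S Exo)) u = S u"
      using AE_S_determined_by_exo_S by eventually_elim (simp add: fS_def)
    show "AE u in PU. (fY \<circ> restr_exo (exo_X Exo)) u = h (counterfactual t u) t"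
      by (simp add: fY_def counterfactual_determined_by_exo_X)
  qed (use hY in simp_all)
qed

lemma cf_fair_imp_stat_parity:
  assumes h: "(\<lambda>(x, s). h x s) \<in> borel_measurable (borel \<Otimes>\<^sub>M borel)"
    and fair: "cf_fair PU X S Xdo Ss h"
  shows "stat_parity PU X S h"
  unfolding stat_parity_def
proof (rule indep_var_if_counterfactuals_agree[where Y = "\<lambda>s u. h (Xdo s u) s"])
  have h_comp [measurable]: "(\<lambda>u. h (f u) (g u)) \<in> borel_measurable PU"
    if "f \<in> borel_measurable PU" "g \<in> borel_measurable PU" for f g
    using measurable_compose[OF measurable_Pair[OF that] h] by simp
  show "random_variable borel (\<lambda>u. h (X u) (S u))"
    by measurable
  show "indep_var borel S borel (\<lambda>u. h (Xdo s u) s)" if "s \<in> Ss" for s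
  proof (rule indep_var_AE_cong[OF indep_S_counterfactual[OF h]])
    show "AE u in PU. h (counterfactual s u) s = h (Xdo s u) s"
      using AE_Xdo_eq_counterfactual[OF that] by eventually_elim simp
    show "random_variable borel (\<lambda>u. h (Xdo s u) s)"
      using Xdo_measurable[OF that] by measurable
  qed simp_all
  show "\<P>(u in PU. h (Xdo s u) s \<in> B \<and> S u = s) = \<P>(u in PU. h (Xdo s' u) s' \<in> B \<and> S u = s)"
    if "s \<in> Ss" "s' \<in> Ss" "B \<in> sets borel" for s s' B
    using cond_laws_ae_eq_prob_eq[of S s X "\<lambda>u. h (Xdo s u) s" "\<lambda>u. h (Xdo s' u) s'" UNIV B]
      fair that prob_S_pos by (simp add: cf_fair_def)
  show "AE u in PU. S u = s \<longrightarrow> h (X u) (S u) = h (Xdo s u) s" if "s \<in> Ss" for s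
    using AE_X_eq_Xdo[OF that] by eventually_elim auto
qed (simp_all add: finite_Ss AE_S_in_Ss)

end

subsection \<open>Statistical parity does not imply counterfactual fairness\<close>

lemma card_pair_preimage:
  assumes "bij_betw (\<lambda>v. (f v, g v)) V (F \<times> F')"
  shows "card {v \<in> V. f v \<in> A \<and> g v \<in> B} = card (F \<inter> A) * card (F' \<inter> B)"
proof -
  have "(\<lambda>v. (f v, g v)) ` {v \<in> V. f v \<in> A \<and> g v \<in> B} = (\<lambda>v. (f v, g v)) ` V \<inter> A \<times> B"
    by auto
  also have "\<dots> = (F \<inter> A) \<times> (F' \<inter> B)"
    using assms by (auto simp: bij_betw_def)
  finally have image: "(\<lambda>v. (f v, g v)) ` {v \<in> V. f v \<in> A \<and> g v \<in> B} = (F \<inter> A) \<times> (F' \<inter> B)" .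
  have "inj_on (\<lambda>v. (f v, g v)) {v \<in> V. f v \<in> A \<and> g v \<in> B}"
    using assms unfolding bij_betw_def by (auto intro: inj_on_subset)
  from card_image[OF this] show ?thesis
    by (simp add: image card_cartesian_product)
qed

lemma indep_var_uniform_bij_product:
  fixes f g :: "'a::topological_space \<Rightarrow> real"
  assumes V: "finite V" "V \<noteq> {}" and [measurable]: "f \<in> borel_measurable borel" "g \<in> borel_measurable borel"
    and bij: "bij_betw (\<lambda>v. (f v, g v)) V (F \<times> F')"
  shows "prob_space.indep_var (distr (measure_pmf (pmf_of_set V)) borel id) borel f borel g"
proof -
  let ?M = "distr (measure_pmf (pmf_of_set V)) borel id"
  interpret prob_space ?M
    by (intro prob_space.prob_space_distr measure_pmf.prob_space_axioms) simp
  have prob_M: "prob {x. P x} = card {v \<in> V. P v} / card V" if "Measurable.pred borel P" for P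
    using that V by (simp add: measure_distr measure_pmf_of_set Int_def)
  have V_card: "card V = card F * card F'" "card F \<noteq> 0" "card F' \<noteq> 0"
    using bij_betw_same_card[OF bij] V by (auto simp: card_cartesian_product)
  show ?thesis
  proof (rule indep_varI_prob_conj)
    fix A B :: "real set"
    assume [measurable]: "A \<in> sets borel" "B \<in> sets borel"
    have "\<P>(x in ?M. f x \<in> A \<and> g x \<in> B) = card (F \<inter> A) * card (F' \<inter> B) / card V"
      by (subst prob_M) (measurable, simp add: card_pair_preimage[OF bij])
    also have "\<dots> = (card (F \<inter> A) * card F' / card V) * (card F * card (F' \<inter> B) / card V)"
      using V_card by (simp add: field_simps)
    also have "\<dots> = \<P>(x in ?M. f x \<in> A) * \<P>(x in ?M. g x \<in> B)"
      using card_pair_preimage[OF bij, of A UNIV] card_pair_preimage[OF bij, of UNIV B]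
      by (simp add: prob_M[of "\<lambda>x. f x \<in> A"] prob_M[of "\<lambda>x. g x \<in> B"])
    finally show "\<P>(x in ?M. f x \<in> A \<and> g x \<in> B) = \<P>(x in ?M. f x \<in> A) * \<P>(x in ?M. g x \<in> B)" .
  qed simp_all
qed

definition bits :: "(real^2) set" where
  "bits = {u. u $ 1 \<in> {0, 1} \<and> u $ 2 \<in> {0, 1}}"

lemma bits_eq: "bits = {vector [0, 0], vector [0, 1], vector [1, 0], vector [1, 1]}"
  by (auto simp: bits_def vec_eq_iff forall_2)

lemma finite_bits: "finite bits" and bits_nonempty: "bits \<noteq> {}"
  by (simp_all add: bits_eq)

definition cex_U :: "(real^2) measure" where
  "cex_U = distr (measure_pmf (pmf_of_set bits)) borel id"

definition cex_G :: "(1, 2) struct_eqs" where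
  "cex_G i v u = (case i of None \<Rightarrow> u $ 1 | Some k \<Rightarrow> u $ 2)"

definition cex_Endo :: "1 option \<Rightarrow> 1 option set" where
  "cex_Endo i = {}"

definition cex_Exo :: "1 option \<Rightarrow> 2 set" where
  "cex_Exo i = (case i of None \<Rightarrow> {1} | Some k \<Rightarrow> {2})"

definition cex_X :: "real^2 \<Rightarrow> real^1" where
  "cex_X u = (\<chi> k. u $ 2)"

definition cex_S :: "real^2 \<Rightarrow> real" where
  "cex_S u = u $ 1"

definition cex_h :: "real^1 \<Rightarrow> real \<Rightarrow> real" where
  "cex_h x s = \<bar>x $ 1 - s\<bar>"

lemma cex_U_prob_space: "prob_space cex_U"
  unfolding cex_U_def by (intro prob_space.prob_space_distr measure_pmf.prob_space_axioms) simp

lemma sets_cex_U [measurable_cong, simp]: "sets cex_U = sets borel"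
  and space_cex_U [simp]: "space cex_U = UNIV"
  by (simp_all add: cex_U_def)

lemma measure_cex_U_pos:
  assumes "E \<in> sets borel" "v \<in> bits" "v \<in> E"
  shows "measure cex_U E > 0"
proof -
  have "card (bits \<inter> E) > 0"
    using assms finite_bits by (auto simp: card_gt_0_iff)
  then show ?thesis
    using assms(1) finite_bits bits_nonempty
    by (simp add: cex_U_def measure_distr measure_pmf_of_set card_gt_0_iff)
qed

lemma AE_cex_U_bits: "AE u in cex_U. u \<in> bits"
proof -
  have "bits \<in> sets borel"
    using finite_bits by (simp add: finite_imp_closed)
  then show ?thesis
    unfolding cex_U_def by (subst AE_distr_iff) (auto simp: AE_measure_pmf_iff finite_bits bits_nonempty)
qed

lemma cex_X_measurable [measurable]: "cex_X \<in> borel_measurable borel"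
  unfolding cex_X_def by (intro borel_measurable_vec_lambda borel_measurable_vec_nth)

lemma cex_S_measurable [measurable]: "cex_S \<in> borel_measurable borel"
  unfolding cex_S_def[abs_def] by (rule borel_measurable_vec_nth)

lemma cex_scm_setting: "scm_setting cex_U cex_G cex_Endo cex_Exo cex_X cex_S (\<lambda>_. cex_X) {0, 1}"
  unfolding scm_setting_def
proof (intro conjI allI impI ballI)
  fix i :: "1 option"
  show "(\<lambda>(v, u). cex_G i v u) \<in> borel_measurable (PiM UNIV (\<lambda>_. borel) \<Otimes>\<^sub>M borel)"
    by (cases i) (simp_all add: cex_G_def case_prod_beta')
next
  fix i :: "1 option" and v v' :: "1 option \<Rightarrow> real" and u u' :: "real^2"
  assume "\<forall>j\<in>cex_Exo i. u $ j = u' $ j"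
  then show "cex_G i v u = cex_G i v' u'"
    by (cases i) (auto simp: cex_G_def cex_Exo_def)
next
  show "AE u in cex_U. cex_S u \<in> {0, 1}"
    using AE_cex_U_bits by eventually_elim (simp add: bits_def cex_S_def)
  fix s :: real
  assume "s \<in> {0, 1}"
  then show "\<P>(u in cex_U. cex_S u = s) > 0"
    by (intro measure_cex_U_pos[where v = "vector [s, 0]"]) (auto simp: bits_def cex_S_def)
qed (auto simp: cex_U_prob_space cex_S_def is_solution_def endo_val_def cex_G_def cex_X_def
    intervene_S_def split: option.split)

lemma cex_assm_A: "assm_A cex_Endo cex_Exo"
proof -
  have "Domain (causal_graph cex_Endo cex_Exo) \<inter> Range (causal_graph cex_Endo cex_Exo) = {}"
    by (auto simp: causal_graph_def cex_Endo_def)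
  then show ?thesis
    unfolding assm_A_def acyclic_def by (metis Domain.DomainI Range.RangeI disjoint_iff trancl_domain trancl_range)
qed

lemma cex_indep_coins: "prob_space.indep_var cex_U borel (\<lambda>u. u $ 1) borel (\<lambda>u :: real^2. u $ 2)"
  unfolding cex_U_def
proof (rule indep_var_uniform_bij_product[OF finite_bits bits_nonempty])
  show "bij_betw (\<lambda>u. (u $ 1, u $ 2)) bits ({0, 1} \<times> {0, 1})"
    by (auto simp: bits_eq bij_betw_def)
qed simp_all

lemma cex_assm_RE: "assm_RE cex_U cex_Endo cex_Exo"
proof -
  have "exo_S cex_Exo = {1}" "exo_X cex_Exo = {2}"
    by (simp_all add: exo_S_def exo_X_def cex_Exo_def)
  moreover have "restr_exo {j} = (\<lambda>r. \<lambda>_\<in>{j}. r) \<circ> (\<lambda>u. u $ j)" for j :: 2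
    by (auto simp: restr_exo_def fun_eq_iff)
  moreover have "(\<lambda>r. \<lambda>_\<in>{j}. r) \<in> measurable borel (PiM {j} (\<lambda>_. borel))" for j :: 2
    by (rule measurable_restrict) simp
  ultimately show ?thesis
    unfolding assm_RE_def cex_Endo_def
    by (simp add: prob_space.indep_var_compose[OF cex_U_prob_space cex_indep_coins])
qed

lemma cex_h_measurable: "(\<lambda>(x, s). cex_h x s) \<in> borel_measurable (borel \<Otimes>\<^sub>M borel)"
  unfolding cex_h_def borel_prod case_prod_beta
  by (intro borel_measurable_continuous_onI continuous_intros)

lemma cex_stat_parity: "stat_parity cex_U cex_X cex_S cex_h"
proof -
  have bij: "bij_betw (\<lambda>u. (\<bar>u $ 2 - u $ 1\<bar>, u $ 1)) bits ({0, 1} \<times> {0, 1})"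
    by (auto simp: bits_eq bij_betw_def)
  have "prob_space.indep_var cex_U borel (\<lambda>u. \<bar>u $ 2 - u $ 1\<bar>) borel (\<lambda>u. u $ 1)"
    unfolding cex_U_def by (rule indep_var_uniform_bij_product[OF finite_bits bits_nonempty _ _ bij]) simp_all
  then show ?thesis
    by (simp add: stat_parity_def cex_h_def cex_X_def cex_S_def[abs_def])
qed

lemma cex_not_cf_fair: "\<not> cf_fair cex_U cex_X cex_S (\<lambda>_. cex_X) {0, 1} cex_h"
proof
  assume "cf_fair cex_U cex_X cex_S (\<lambda>_. cex_X) {0, 1} cex_h"
  then have "cond_laws_ae_eq (cond_S cex_U cex_S 0) cex_X (\<lambda>u. cex_h (cex_X u) 0) (\<lambda>u. cex_h (cex_X u) 1)"
    by (simp add: cf_fair_def)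
  then have "\<P>(u in cex_U. cex_X u \<in> {x. x $ 1 = 0} \<and> cex_h (cex_X u) 0 \<in> {0} \<and> cex_S u = 0) =
      \<P>(u in cex_U. cex_X u \<in> {x. x $ 1 = 0} \<and> cex_h (cex_X u) 1 \<in> {0} \<and> cex_S u = 0)"
  proof (rule prob_space.cond_laws_ae_eq_prob_eq[OF cex_U_prob_space])
    show "\<P>(u in cex_U. cex_S u = 0) > 0"
      by (intro measure_cex_U_pos[where v = "vector [0, 0]"]) (auto simp: bits_def cex_S_def)
  qed (simp_all add: cex_h_def cex_X_def)
  moreover have "\<P>(u in cex_U. cex_X u \<in> {x. x $ 1 = 0} \<and> cex_h (cex_X u) 1 \<in> {0} \<and> cex_S u = 0) = 0"
  proof -
    have "{u \<in> space cex_U. cex_X u \<in> {x. x $ 1 = 0} \<and> cex_h (cex_X u) 1 \<in> {0} \<and> cex_S u = 0} = {}"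
      by (simp add: cex_X_def cex_h_def)
    then show ?thesis
      by (metis measure_empty)
  qed
  moreover have "\<P>(u in cex_U. cex_X u \<in> {x. x $ 1 = 0} \<and> cex_h (cex_X u) 0 \<in> {0} \<and> cex_S u = 0) > 0"
    by (intro measure_cex_U_pos[where v = "vector [0, 0]"]) (auto simp: bits_def cex_X_def cex_h_def cex_S_def)
  ultimately show False
    by linarith
qed

theorem proposition6:
  shows "(\<forall>(PU :: (real^'e::finite) measure) G Endo Exo (X :: real^'e \<Rightarrow> real^'d::finite) S Xdo Ss h.
            scm_setting PU G Endo Exo X S Xdo Ss \<and> assm_A Endo Exo \<and> assm_RE PU Endo Exo \<and>
            (\<lambda>(x, s). h x s) \<in> borel_measurable (borel \<Otimes>\<^sub>M borel) \<and>
            cf_fair PU X S Xdo Ss h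
            \<longrightarrow> stat_parity PU X S h)
       \<and> (\<exists>(PU :: (real^2) measure) G Endo Exo (X :: real^2 \<Rightarrow> real^1) S Xdo Ss h.
            scm_setting PU G Endo Exo X S Xdo Ss \<and> assm_A Endo Exo \<and> assm_RE PU Endo Exo \<and>
            (\<lambda>(x, s). h x s) \<in> borel_measurable (borel \<Otimes>\<^sub>M borel) \<and>
            stat_parity PU X S h \<and> \<not> cf_fair PU X S Xdo Ss h)"
  using acyclic_scm_RE.cf_fair_imp_stat_parity[OF acyclic_scm_RE.intro]
    cex_scm_setting cex_assm_A cex_assm_RE cex_h_measurable cex_stat_parity cex_not_cf_fair
  by blast

end
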